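(* Consider the homogeneous tightly-feasible interference channel $[(N,M)^K]$ (all RXs have $N$ antennas, all TXs have $M$ antennas, with $M+N=K+1$), and assume $M\neq 1$ and $M\neq K$. Then there is no pair $(\mathcal S_{\mathrm{RX}},\mathcal S_{\mathrm{TX}})$ of subsets of $\mathcal K$, other than $(\emptyset,\emptyset)$ and $(\mathcal K,\mathcal K)$, satisfying $\mathcal N_{\mathrm{Var}}(\mathcal S_{\mathrm{RX}},\mathcal S_{\mathrm{TX}})=\mathcal N_{\mathrm{Eq}}(\mathcal S_{\mathrm{RX}},\mathcal S_{\mathrm{TX}})$ (i.e. no strictly included generalized tightly-feasible sub-IC).
   Context: $\mathcal K=\{1,\dots,K\}$, $K\ge2$. For $\mathcal S_{\mathrm{RX}},\mathcal S_{\mathrm{TX}}\subseteq\mathcal K$, with $N_i=N$ and $M_i=M$ for all $i$: $\mathcal N_{\mathrm{Var}}(\mathcal S_{\mathrm{RX}},\mathcal S_{\mathrm{TX}})=\sum_{i\in\mathcal S_{\mathrm{RX}}}(N_i-1)+\sum_{i\in\mathcal S_{\mathrm{TX}}}(M_i-1)$ and $\mathcal N_{\mathrm{Eq}}(\mathcal S_{\mathrm{RX}},\mathcal S_{\mathrm{TX}})=\#\{(j,k): j\in\mathcal S_{\mathrm{RX}},k\in\mathcal S_{\mathrm{TX}},j\ne k\}$. A generalized sub-IC is the interference channel formed by a subset of RXs and a subset of TXs (not necessarily paired); it is tightly-feasible when $\mathcal N_{\mathrm{Var}}=\mathcal N_{\mathrm{Eq}}$ for its pair of sets. *)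

theory Defs
  imports Main
begin

text \<open>Homogeneous K-user IC: every RX has N antennas, every TX has M antennas.
  Users are indexed by {1..K}.\<close>

definition N_Var :: "nat \<Rightarrow> nat \<Rightarrow> nat set \<Rightarrow> nat set \<Rightarrow> int" where
  "N_Var N M S_RX S_TX =
     (\<Sum>i\<in>S_RX. (int N - 1)) + (\<Sum>i\<in>S_TX. (int M - 1))"

definition N_Eq :: "nat set \<Rightarrow> nat set \<Rightarrow> int" where
  "N_Eq S_RX S_TX = int (card {(j, k). j \<in> S_RX \<and> k \<in> S_TX \<and> j \<noteq> k})"

end

theory Submission
  imports Defs
begin

text \<open>
  Write a = |S_RX|, b = |S_TX|, c = |S_RX \<inter> S_TX| and p = M - 1, q = N - 1, so that
  K = p + q + 1.  Counting gives N_Var = a q + b p and N_Eq = a b - c, hence tightness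
  means a b = a q + b p + c.

  A tight pair with |S_RX| + |S_TX| > K has a dual with size sum
      < K.  That dual is tight, hence empty, so the pair is (K, K).
\<close>

text \<open>The ordered pairs (j, k) \<in> A \<times> B with j \<noteq> k are all of A \<times> B except
  the diagonal over A \<inter> B.\<close>
lemma card_offdiagonal_pairs:
  assumes "finite A" "finite B"
  shows "card {(j, k). j \<in> A \<and> k \<in> B \<and> j \<noteq> k} + card (A \<inter> B) = card A * card B"
proof -
  let ?Off = "{(j, k). j \<in> A \<and> k \<in> B \<and> j \<noteq> k}"
  have split: "A \<times> B = ?Off \<union> (\<lambda>x. (x, x)) ` (A \<inter> B)" by auto
  have "finite ?Off" by (rule finite_subset[of _ "A \<times> B"]) (use assms in auto)
  then have "card (A \<times> B) = card ?Off + card ((\<lambda>x. (x, x)) ` (A \<inter> B))"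
    unfolding split by (rule card_Un_disjoint) (use assms in auto)
  moreover have "card ((\<lambda>x. (x, x)) ` (A \<inter> B)) = card (A \<inter> B)"
    by (rule card_image) (auto simp: inj_on_def)
  ultimately show ?thesis by (simp add: card_cartesian_product)
qed

lemma N_Eq_card:
  assumes "finite A" "finite B"
  shows "N_Eq A B = int (card A * card B) - int (card (A \<inter> B))"
  using card_offdiagonal_pairs[OF assms] unfolding N_Eq_def by linarith

text \<open>Closed form of the number of variables.  It holds unconditionally because
  sums over infinite sets vanish, as does card.\<close>
lemma N_Var_card:
  "N_Var N M A B = int (card A) * (int N - 1) + int (card B) * (int M - 1)"
  unfolding N_Var_def by simp

text \<open>The arithmetic core.  If a + b \<le> p + q + 1, then a \<le> p or b \<le> q.  In the
  first case a b \<le> b p, so a q + c = 0; in the second a b \<le> a q, so b p + c = 0.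
  Either way a = b = 0.\<close>
lemma no_small_tight_solution:
  fixes a b p q c :: nat
  assumes "p \<ge> 1" "q \<ge> 1" "a + b \<le> p + q + 1" "a * b = a * q + b * p + c"
  shows "a = 0 \<and> b = 0"
proof (cases "a \<le> p")
  case True
  then have "a * b \<le> b * p" by (simp add: mult.commute)
  then have "a * q + c = 0" using assms(4) by linarith
  then show ?thesis using assms by simp
next
  case False
  then have "b \<le> q" using assms(3) by simp
  then have "a * b \<le> a * q" by simp
  then have "b * p + c = 0" using assms(4) by linarith
  then show ?thesis using assms by simp
qed

lemma tight_small_pair_is_empty:
  assumes "N \<ge> 2" "M \<ge> 2" "finite A" "finite B"
    and size: "card A + card B \<le> M + N - 1"
    and tight: "N_Var N M A B = N_Eq A B"
  shows "A = {} \<and> B = {}"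
proof -
  define a b c where "a = card A" and "b = card B" and "c = card (A \<inter> B)"
  have "int (a * (N - 1) + b * (M - 1)) = int (a * b) - int c"
    using tight assms(1,2) unfolding N_Var_card N_Eq_card[OF assms(3,4)] a_def b_def c_def
    by (simp add: of_nat_diff)
  then have "a * b = a * (N - 1) + b * (M - 1) + c" by linarith
  then have "a = 0 \<and> b = 0"
    by (rule no_small_tight_solution[rotated 3]) (use assms(1,2) size a_def b_def in auto)
  then show ?thesis using assms(3,4) unfolding a_def b_def by simp
qed

text \<open>Inside a user set U with |U| = M + N - 1, exchanging receivers and
  transmitters and passing to complements preserves the defect N_Eq - N_Var.  This
  is the identity (K-b)(K-a) - (K-b) q - (K-a) p - (K-a-b+c) = a b - a q - b p - c.\<close>
lemma defect_dual:
  assumes "finite U" "card U + 1 = M + N" "A \<subseteq> U" "B \<subseteq> U"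
  shows "N_Eq (U - B) (U - A) - N_Var N M (U - B) (U - A) = N_Eq A B - N_Var N M A B"
proof -
  have fA: "finite A" and fB: "finite B" using assms finite_subset by auto
  have compA: "int (card (U - A)) = int (card U) - int (card A)"
    and compB: "int (card (U - B)) = int (card U) - int (card B)"
    using assms by (simp_all add: card_Diff_subset card_mono of_nat_diff fA fB)
  have "(U - B) \<inter> (U - A) = U - (A \<union> B)" by auto
  then have "int (card ((U - B) \<inter> (U - A))) = int (card U) - int (card (A \<union> B))"
    using assms by (simp add: card_Diff_subset card_mono of_nat_diff fA fB)
  also have "int (card (A \<union> B)) = int (card A) + int (card B) - int (card (A \<inter> B))"
    using card_Un_Int[OF fA fB] by simp
  finally have compAB:
    "int (card ((U - B) \<inter> (U - A)))
       = int (card U) - int (card A) - int (card B) + int (card (A \<inter> B))" by simp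
  have K: "int (card U) = int M + int N - 1" using assms(2) by linarith
  have fUA: "finite (U - A)" and fUB: "finite (U - B)" using assms(1) by auto
  show ?thesis
    unfolding N_Eq_card[OF fA fB] N_Eq_card[OF fUB fUA] N_Var_card of_nat_mult
      compA compB compAB K
    by (simp add: algebra_simps)
qed

theorem corollary1:
  fixes K N M :: nat
  assumes "K \<ge> 2" and "N \<ge> 1" and "M \<ge> 1"
    and "M + N = K + 1"
    and "M \<noteq> 1" and "M \<noteq> K"
  shows "\<not> (\<exists>S_RX S_TX. S_RX \<subseteq> {1..K} \<and> S_TX \<subseteq> {1..K}
            \<and> \<not> (S_RX = {} \<and> S_TX = {})
            \<and> \<not> (S_RX = {1..K} \<and> S_TX = {1..K})
            \<and> N_Var N M S_RX S_TX = N_Eq S_RX S_TX)"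
proof
  assume "\<exists>S_RX S_TX. S_RX \<subseteq> {1..K} \<and> S_TX \<subseteq> {1..K}
            \<and> \<not> (S_RX = {} \<and> S_TX = {})
            \<and> \<not> (S_RX = {1..K} \<and> S_TX = {1..K})
            \<and> N_Var N M S_RX S_TX = N_Eq S_RX S_TX"
  then obtain A B where AB: "A \<subseteq> {1..K}" "B \<subseteq> {1..K}"
    and nonempty: "\<not> (A = {} \<and> B = {})" and proper: "\<not> (A = {1..K} \<and> B = {1..K})"
    and tight: "N_Var N M A B = N_Eq A B" by blast
  let ?U = "{1..K}"
  have MN: "N \<ge> 2" "M \<ge> 2" and cardU: "card ?U + 1 = M + N" using assms by auto
  have fin: "finite A" "finite B" using AB finite_subset by auto
  show False
  proof (cases "card A + card B \<le> K")
    case True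
    then show False using tight_small_pair_is_empty[OF MN fin _ tight] nonempty assms(4) by simp
  next
    case False
    have "card (?U - B) + card (?U - A) \<le> M + N - 1"
      using False AB fin by (simp add: card_Diff_subset assms(4))
    moreover have "N_Var N M (?U - B) (?U - A) = N_Eq (?U - B) (?U - A)"
      using defect_dual[OF _ cardU AB] tight by simp
    ultimately have "?U - B = {} \<and> ?U - A = {}"
      by (intro tight_small_pair_is_empty[OF MN]) simp_all
    then have "A = ?U \<and> B = ?U" using AB by blast
    then show False using proper by blast
  qed
qed

end
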